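(* There exists a bipartite Bell-type linear inequality that is unstable under composition if and only if there exist two bipartite closed sets of correlations $\mathcal{S}_1,\mathcal{S}_2$ with non-trivial intersection, i.e. with $\mathcal{S}_1\cap\mathcal{S}_2\neq\mathcal{S}_1$ and $\mathcal{S}_1\cap\mathcal{S}_2\neq\mathcal{S}_2$.
   Context: A bipartite Bell scenario is given by finite input alphabets $\mathcal{X},\mathcal{Y}$ (for Alice and Bob) and finite output alphabets $\mathcal{A},\mathcal{B}$. A box (pair of boxes) in this scenario is a conditional probability distribution $P(a,b|x,y)$, $a\in\mathcal{A},b\in\mathcal{B},x\in\mathcal{X},y\in\mathcal{Y}$. A box is no-signalling if $\sum_a P(a,b|x,y)$ does not depend on $x$ and $\sum_b P(a,b|x,y)$ does not depend on $y$. Wirings: given $n$ boxes $P_1,\dots,P_n$ (each in some bipartite Bell scenario), each shared between Alice (who holds the first side of each) and Bob (who holds the second side), and given a target scenario $(\mathcal{X}',\mathcal{Y}',\mathcal{A}',\mathcal{B}')$, a (deterministic) wiring $\mathcal{W}_A$ for Alice is a procedure that, on effective input $x'\in\mathcal{X}'$, sequentially chooses a not-yet-used box $i$ and an input for Alice's side of box $i$, receives the corresponding output, where the choice of the next box and input is a function of $x'$ and of all previous boxes, inputs and outputs; finally it produces an effective output $a'\in\mathcal{A}'$ as a function of $x'$ and the whole history. Bob's wiring $\mathcal{W}_B$ is defined analogously. Since the boxes are used independently, this yields a well-defined new box $\mathcal{W}_A\otimes\mathcal{W}_B(\otimes_{i=1}^n P_i)(a',b'|x',y')$ in the target scenario.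 A (physically) closed set of bipartite correlations $\mathcal{S}$ is a collection of sets of boxes, one for each bipartite Bell scenario, such that: (1) each such set is convex; (2) $\mathcal{S}$ is symmetric under exchanging Alice and Bob; (3) for any finite collection of boxes $P_1,\dots,P_n$ in $\mathcal{S}$ and any pair of wirings $\mathcal{W}_A,\mathcal{W}_B$, the box $\mathcal{W}_A\otimes\mathcal{W}_B(\otimes_{i=1}^nP_i)$ belongs to $\mathcal{S}$. All closed sets considered are assumed to be topologically closed as well. For closed sets $\mathcal{S}_1,\mathcal{S}_2$, $\mathcal{S}_1\cap\mathcal{S}_2$ is taken scenario-wise, and $\mathcal{S}_1+\mathcal{S}_2$ denotes the smallest closed set containing $\mathcal{S}_1\cup\mathcal{S}_2$. A bipartite Bell-type linear inequality is an inequality $B(P)=\sum_{a,b,x,y}B(a,b|x,y)P(a,b|x,y)\le K_B$ on boxes of a fixed Bell scenario, with real coefficients $B(a,b|x,y)$ and real $K_B$. A closed set is compatible with it if every box of $\mathcal{S}$ in that scenario satisfies it. The inequality is stable under composition if for every pair of closed sets $\mathcal{S}_1,\mathcal{S}_2$ compatible with it, $\mathcal{S}_1+\mathcal{S}_2$ is also compatible with it; otherwise it is unstable under composition. *)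

theory Defs
  imports Complex_Main "HOL-Library.FuncSet"
begin

text \<open>A bipartite Bell scenario: sizes of Alice's input alphabet, Bob's input alphabet,
  Alice's output alphabet, Bob's output alphabet. Alphabets are {0..<n}.\<close>
datatype scenario = Scen (nX: nat) (nY: nat) (nA: nat) (nB: nat)

definition valid_scenario :: "scenario \<Rightarrow> bool" where
  "valid_scenario s \<longleftrightarrow> 0 < nX s \<and> 0 < nY s \<and> 0 < nA s \<and> 0 < nB s"

text \<open>A box P a b x y = P(a,b|x,y); canonically zero outside the alphabets.\<close>
type_synonym box = "nat \<Rightarrow> nat \<Rightarrow> nat \<Rightarrow> nat \<Rightarrow> real"

definition is_box :: "scenario \<Rightarrow> box \<Rightarrow> bool" where
  "is_box s P \<longleftrightarrow> valid_scenario s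
     \<and> (\<forall>a b x y. 0 \<le> P a b x y)
     \<and> (\<forall>a b x y. \<not> (a < nA s \<and> b < nB s \<and> x < nX s \<and> y < nY s) \<longrightarrow> P a b x y = 0)
     \<and> (\<forall>x<nX s. \<forall>y<nY s. (\<Sum>a<nA s. \<Sum>b<nB s. P a b x y) = 1)"

definition no_signalling :: "scenario \<Rightarrow> box \<Rightarrow> bool" where
  "no_signalling s P \<longleftrightarrow> is_box s P
     \<and> (\<forall>a<nA s. \<forall>x<nX s. \<forall>y<nY s. \<forall>y'<nY s.
           (\<Sum>b<nB s. P a b x y) = (\<Sum>b<nB s. P a b x y'))
     \<and> (\<forall>b<nB s. \<forall>y<nY s. \<forall>x<nX s. \<forall>x'<nX s.
           (\<Sum>a<nA s. P a b x y) = (\<Sum>a<nA s. P a b x' y))"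

text \<open>A history is a list of (box index, input, output).
  Given the effective input and the history so far, a wiring either queries
  box i with input u, or stops with an effective output r.\<close>
datatype wstep = Query nat nat | Output nat

type_synonym history = "(nat \<times> nat \<times> nat) list"
type_synonym wiring = "nat \<Rightarrow> history \<Rightarrow> wstep"

text \<open>Run of a wiring on effective input x, when box i would answer outs i (each
  box is used at most once, so one output per box suffices).\<close>
fun walk :: "wiring \<Rightarrow> nat \<Rightarrow> (nat \<Rightarrow> nat) \<Rightarrow> nat \<Rightarrow> history \<Rightarrow> history" where
  "walk W x outs 0 h = h"
| "walk W x outs (Suc k) h =
     (case W x h of Query i u \<Rightarrow> walk W x outs k (h @ [(i, u, outs i)]) | Output r \<Rightarrow> h)"

definition valid_history :: "nat \<Rightarrow> (nat \<Rightarrow> nat) \<Rightarrow> (nat \<Rightarrow> nat) \<Rightarrow> history \<Rightarrow> bool" where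
  "valid_history n inp outp h \<longleftrightarrow> distinct (map fst h)
     \<and> (\<forall>(i, u, r) \<in> set h. i < n \<and> u < inp i \<and> r < outp i)"

definition wf_wiring :: "nat \<Rightarrow> (nat \<Rightarrow> nat) \<Rightarrow> (nat \<Rightarrow> nat) \<Rightarrow> nat \<Rightarrow> nat \<Rightarrow> wiring \<Rightarrow> bool" where
  "wf_wiring n inp outp nin nout W \<longleftrightarrow>
     (\<forall>x<nin. \<forall>h. valid_history n inp outp h \<longrightarrow>
        (case W x h of Query i u \<Rightarrow> i < n \<and> i \<notin> fst ` set h \<and> u < inp i
                     | Output r \<Rightarrow> r < nout))"

text \<open>Input actually fed into box i (0 if the box is never used on this side).\<close>
definition wiring_inputs :: "wiring \<Rightarrow> nat \<Rightarrow> nat \<Rightarrow> (nat \<Rightarrow> nat) \<Rightarrow> nat \<Rightarrow> nat" where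
  "wiring_inputs W n x outs i =
     (case map_of (map (\<lambda>(j, u, r). (j, u)) (walk W x outs n [])) i of Some u \<Rightarrow> u | None \<Rightarrow> 0)"

definition wiring_output :: "wiring \<Rightarrow> nat \<Rightarrow> nat \<Rightarrow> (nat \<Rightarrow> nat) \<Rightarrow> nat" where
  "wiring_output W n x outs =
     (case W x (walk W x outs n []) of Output r \<Rightarrow> r | Query i u \<Rightarrow> 0)"

text \<open>The box W_A \<otimes> W_B (\<otimes>_{i<n} P_i) in target scenario t (boxes P_i in scenario ss i).\<close>
definition compose :: "nat \<Rightarrow> (nat \<Rightarrow> scenario) \<Rightarrow> (nat \<Rightarrow> box) \<Rightarrow> scenario \<Rightarrow> wiring \<Rightarrow> wiring \<Rightarrow> box" where
  "compose n ss Ps t WA WB = (\<lambda>a' b' x' y'.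
     if a' < nA t \<and> b' < nB t \<and> x' < nX t \<and> y' < nY t then
       (\<Sum>oa \<in> PiE {..<n} (\<lambda>i. {..<nA (ss i)}). \<Sum>ob \<in> PiE {..<n} (\<lambda>i. {..<nB (ss i)}).
          if wiring_output WA n x' oa = a' \<and> wiring_output WB n y' ob = b'
          then (\<Prod>i<n. Ps i (oa i) (ob i) (wiring_inputs WA n x' oa i) (wiring_inputs WB n y' ob i))
          else 0)
     else 0)"

type_synonym corr_set = "scenario \<Rightarrow> box set"

definition closed_corr_set :: "corr_set \<Rightarrow> bool" where
  "closed_corr_set S \<longleftrightarrow>
     (\<forall>s. S s \<subseteq> {P. no_signalling s P})
   \<and> (\<forall>s. \<forall>P\<in>S s. \<forall>Q\<in>S s. \<forall>c::real. 0 \<le> c \<and> c \<le> 1 \<longrightarrow>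
          (\<lambda>a b x y. c * P a b x y + (1 - c) * Q a b x y) \<in> S s)
   \<and> (\<forall>s. \<forall>P\<in>S s. (\<lambda>a b x y. P b a y x) \<in> S (Scen (nY s) (nX s) (nB s) (nA s)))
   \<and> (\<forall>n ss Ps t WA WB. valid_scenario t \<and> (\<forall>i<n. Ps i \<in> S (ss i))
          \<and> wf_wiring n (\<lambda>i. nX (ss i)) (\<lambda>i. nA (ss i)) (nX t) (nA t) WA
          \<and> wf_wiring n (\<lambda>i. nY (ss i)) (\<lambda>i. nB (ss i)) (nY t) (nB t) WB
          \<longrightarrow> compose n ss Ps t WA WB \<in> S t)
   \<and> (\<forall>s f P. (\<forall>k. f k \<in> S s) \<and> (\<forall>a b x y. (\<lambda>k. f k a b x y) \<longlonglongrightarrow> P a b x y)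
          \<longrightarrow> P \<in> S s)"

definition inter_corr :: "corr_set \<Rightarrow> corr_set \<Rightarrow> corr_set" where
  "inter_corr S1 S2 = (\<lambda>s. S1 s \<inter> S2 s)"

definition plus_corr :: "corr_set \<Rightarrow> corr_set \<Rightarrow> corr_set" where
  "plus_corr S1 S2 = (\<lambda>s. \<Inter> {T s | T. closed_corr_set T \<and> (\<forall>s'. S1 s' \<union> S2 s' \<subseteq> T s')})"

definition bell_value :: "scenario \<Rightarrow> box \<Rightarrow> box \<Rightarrow> real" where
  "bell_value s B P = (\<Sum>a<nA s. \<Sum>b<nB s. \<Sum>x<nX s. \<Sum>y<nY s. B a b x y * P a b x y)"

definition compatible :: "corr_set \<Rightarrow> scenario \<Rightarrow> box \<Rightarrow> real \<Rightarrow> bool" where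
  "compatible S s B K \<longleftrightarrow> (\<forall>P\<in>S s. bell_value s B P \<le> K)"

definition stable_under_composition :: "scenario \<Rightarrow> box \<Rightarrow> real \<Rightarrow> bool" where
  "stable_under_composition s B K \<longleftrightarrow>
     (\<forall>S1 S2. closed_corr_set S1 \<and> closed_corr_set S2 \<and> compatible S1 s B K \<and> compatible S2 s B K
        \<longrightarrow> compatible (plus_corr S1 S2) s B K)"

end

theory Submission
  imports Defs
begin

text \<open>If neither of \<open>S1\<close>, \<open>S2\<close> contains the other, pick \<open>P0 \<in> S1 - S2\<close> and \<open>Q0 \<in> S2 - S1\<close>.
  Closed sets of boxes are convex and compact, so Euclidean projection gives a Bell inequality
  separating \<open>P0\<close> from \<open>S2\<close> and one separating \<open>Q0\<close> from \<open>S1\<close>. Place the two scenarios side by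
  side, with disjoint input alphabets, and add the two inequalities. Every box of \<open>S1\<close> (or \<open>S2\<close>)
  in the joint scenario restricts, by a wiring, to a box of the same set on each block, so both sets
  are compatible with the sum. The box in which the inputs decide whether a good box of \<open>S1\<close> or one of
  \<open>S2\<close> is used is a wiring of the two, hence lies in \<open>S1 + S2\<close>, and it scores well on both blocks.
  Conversely, if \<open>S1 \<subseteq> S2\<close> then \<open>S1 + S2 = S2\<close>, so composing cannot violate anything.\<close>

lemma sum_swap_pairs:
  "(\<Sum>a\<in>A. \<Sum>b\<in>B. \<Sum>x\<in>X. \<Sum>y\<in>Y. f a b x y) = (\<Sum>x\<in>X. \<Sum>y\<in>Y. \<Sum>a\<in>A. \<Sum>b\<in>B. f a b x y)"
proof -
  have "(\<Sum>a\<in>A. \<Sum>b\<in>B. \<Sum>x\<in>X. \<Sum>y\<in>Y. f a b x y) = (\<Sum>a\<in>A. \<Sum>x\<in>X. \<Sum>b\<in>B. \<Sum>y\<in>Y. f a b x y)"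
    by (intro sum.cong refl sum.swap)
  also have "\<dots> = (\<Sum>x\<in>X. \<Sum>a\<in>A. \<Sum>y\<in>Y. \<Sum>b\<in>B. f a b x y)"
    by (subst sum.swap) (intro sum.cong refl sum.swap)
  also have "\<dots> = (\<Sum>x\<in>X. \<Sum>y\<in>Y. \<Sum>a\<in>A. \<Sum>b\<in>B. f a b x y)"
    by (intro sum.cong refl sum.swap)
  finally show ?thesis .
qed

lemma sum_delta_pair:
  assumes "finite A'" "finite B'" "a \<in> A'" "b \<in> B'"
  shows "(\<Sum>a'\<in>A'. \<Sum>b'\<in>B'. if a = a' \<and> b = b' then G a' b' else 0) = G a b"
proof -
  have "(\<Sum>a'\<in>A'. \<Sum>b'\<in>B'. if a = a' \<and> b = b' then G a' b' else 0)
     = (\<Sum>a'\<in>A'. if a = a' then (\<Sum>b'\<in>B'. if b = b' then G a' b' else 0) else 0)"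
    by (intro sum.cong refl) auto
  then show ?thesis
    using assms by simp
qed

lemma sum_fibres_pair:
  fixes F :: "'a \<Rightarrow> 'b \<Rightarrow> 'c::comm_semiring_0"
  assumes "finite A'" "finite B'" "\<And>a. a \<in> A \<Longrightarrow> g a \<in> A'" "\<And>b. b \<in> B \<Longrightarrow> h b \<in> B'"
  shows "(\<Sum>a'\<in>A'. \<Sum>b'\<in>B'. K a' b' * (\<Sum>a\<in>A. \<Sum>b\<in>B. if g a = a' \<and> h b = b' then F a b else 0))
       = (\<Sum>a\<in>A. \<Sum>b\<in>B. K (g a) (h b) * F a b)"
proof -
  have "(\<Sum>a'\<in>A'. \<Sum>b'\<in>B'. K a' b' * (\<Sum>a\<in>A. \<Sum>b\<in>B. if g a = a' \<and> h b = b' then F a b else 0))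
      = (\<Sum>a'\<in>A'. \<Sum>b'\<in>B'. \<Sum>a\<in>A. \<Sum>b\<in>B. if g a = a' \<and> h b = b' then K a' b' * F a b else 0)"
    by (simp add: sum_distrib_left if_distrib[of "\<lambda>z. K _ _ * z"] cong: if_cong)
  also have "\<dots> = (\<Sum>a\<in>A. \<Sum>b\<in>B. \<Sum>a'\<in>A'. \<Sum>b'\<in>B'. if g a = a' \<and> h b = b' then K a' b' * F a b else 0)"
    by (rule sum_swap_pairs)
  also have "\<dots> = (\<Sum>a\<in>A. \<Sum>b\<in>B. K (g a) (h b) * F a b)"
    using assms by (intro sum.cong refl sum_delta_pair) auto
  finally show ?thesis .
qed

lemma sum_window_shift:
  fixes k n N :: nat
  assumes "k + n \<le> N"
  shows "(\<Sum>x<N. if k \<le> x \<and> x < k + n then f x else 0) = (\<Sum>x<n. f (x + k))"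
proof -
  have "(\<Sum>x<N. if k \<le> x \<and> x < k + n then f x else 0) = (\<Sum>x\<in>{x\<in>{..<N}. k \<le> x \<and> x < k + n}. f x)"
    by (rule sum.inter_filter[symmetric]) simp
  also have "{x\<in>{..<N}. k \<le> x \<and> x < k + n} = {0 + k..<n + k}" using assms by auto
  also have "sum f {0 + k..<n + k} = (\<Sum>x\<in>{0..<n}. f (x + k))" by (rule sum.shift_bounds_nat_ivl)
  finally show ?thesis by (simp add: atLeast0LessThan)
qed

lemma sum_PiE_lessThan_1: "(\<Sum>oa\<in>PiE {..<Suc 0} A. G (oa 0)) = (\<Sum>a\<in>A 0. G a)"
proof (rule sum.reindex_bij_betw)
  show "bij_betw (\<lambda>oa. oa 0) (PiE {..<Suc 0} A) (A 0)"
  proof (rule bij_betwI')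
    fix oa oa' assume o: "oa \<in> PiE {..<Suc 0} A" "oa' \<in> PiE {..<Suc 0} A"
    show "(oa 0 = oa' 0) = (oa = oa')"
      using PiE_ext[OF o] by auto
  next
    fix a assume "a \<in> A 0"
    then show "\<exists>oa\<in>PiE {..<Suc 0} A. a = oa 0"
      by (intro bexI[of _ "\<lambda>i. if i = 0 then a else undefined"]) (auto simp: PiE_def extensional_def)
  qed auto
qed

lemma sum_PiE_lessThan_2:
  "(\<Sum>oa\<in>PiE {..<Suc (Suc 0)} A. G (oa 0) (oa (Suc 0))) = (\<Sum>a0\<in>A 0. \<Sum>a1\<in>A (Suc 0). G a0 a1)"
proof -
  have "(\<Sum>oa\<in>PiE {..<Suc (Suc 0)} A. G (oa 0) (oa (Suc 0))) = (\<Sum>p\<in>A 0 \<times> A (Suc 0). G (fst p) (snd p))"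
  proof (rule sum.reindex_bij_betw[of "\<lambda>oa. (oa 0, oa (Suc 0))" _ _ "\<lambda>p. G (fst p) (snd p)", simplified])
    show "bij_betw (\<lambda>oa. (oa 0, oa (Suc 0))) (PiE {..<Suc (Suc 0)} A) (A 0 \<times> A (Suc 0))"
    proof (rule bij_betwI')
      fix oa oa' assume o: "oa \<in> PiE {..<Suc (Suc 0)} A" "oa' \<in> PiE {..<Suc (Suc 0)} A"
      show "((oa 0, oa (Suc 0)) = (oa' 0, oa' (Suc 0))) = (oa = oa')"
      proof
        assume "(oa 0, oa (Suc 0)) = (oa' 0, oa' (Suc 0))"
        then show "oa = oa'" by (intro PiE_ext[OF o]) (auto simp: less_Suc_eq)
      qed simp
    next
      fix oa assume "oa \<in> PiE {..<Suc (Suc 0)} A" then show "(oa 0, oa (Suc 0)) \<in> A 0 \<times> A (Suc 0)" by auto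
    next
      fix p assume p: "p \<in> A 0 \<times> A (Suc 0)"
      show "\<exists>oa\<in>PiE {..<Suc (Suc 0)} A. p = (oa 0, oa (Suc 0))"
        by (intro bexI[of _ "\<lambda>i. if i = 0 then fst p else if i = Suc 0 then snd p else undefined"])
           (use p in \<open>auto simp: PiE_def extensional_def less_Suc_eq\<close>)
    qed
  qed
  also have "\<dots> = (\<Sum>a0\<in>A 0. \<Sum>a1\<in>A (Suc 0). G a0 a1)"
    by (simp add: sum.cartesian_product split_def)
  finally show ?thesis .
qed

lemma sum_PiE_lessThan_2_nested:
  "(\<Sum>oa\<in>PiE {..<Suc (Suc 0)} A. \<Sum>ob\<in>PiE {..<Suc (Suc 0)} B. G (oa 0) (oa (Suc 0)) (ob 0) (ob (Suc 0)))
   = (\<Sum>a0\<in>A 0. \<Sum>a1\<in>A (Suc 0). \<Sum>b0\<in>B 0. \<Sum>b1\<in>B (Suc 0). G a0 a1 b0 b1)"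
proof -
  have i: "(\<Sum>ob\<in>PiE {..<Suc (Suc 0)} B. G c d (ob 0) (ob (Suc 0))) = (\<Sum>b0\<in>B 0. \<Sum>b1\<in>B (Suc 0). G c d b0 b1)"
    for c d by (rule sum_PiE_lessThan_2)
  show ?thesis by (simp only: i) (rule sum_PiE_lessThan_2)
qed

lemma sum_select_first_factor:
  fixes F G :: "'a \<Rightarrow> 'b \<Rightarrow> 'c::comm_semiring_0"
  assumes "finite A0" "finite A1" "finite B0" "finite B1"
  shows "(\<Sum>a0\<in>A0. \<Sum>a1\<in>A1. \<Sum>b0\<in>B0. \<Sum>b1\<in>B1. if a0 = a' \<and> b0 = b' then F a0 b0 * G a1 b1 else 0)
       = (if a' \<in> A0 \<and> b' \<in> B0 then F a' b' else 0) * (\<Sum>a1\<in>A1. \<Sum>b1\<in>B1. G a1 b1)"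
proof -
  have "(\<Sum>a0\<in>A0. \<Sum>a1\<in>A1. \<Sum>b0\<in>B0. \<Sum>b1\<in>B1. if a0 = a' \<and> b0 = b' then F a0 b0 * G a1 b1 else 0)
      = (\<Sum>a0\<in>A0. \<Sum>a1\<in>A1. if a0 = a' \<and> b' \<in> B0 then F a0 b' * (\<Sum>b1\<in>B1. G a1 b1) else 0)"
  proof (rule sum.cong[OF refl], rule sum.cong[OF refl])
    fix a0 a1
    have "(\<Sum>b0\<in>B0. \<Sum>b1\<in>B1. if a0 = a' \<and> b0 = b' then F a0 b0 * G a1 b1 else 0)
        = (\<Sum>b0\<in>B0. if b' = b0 then (if a0 = a' then F a0 b0 * (\<Sum>b1\<in>B1. G a1 b1) else 0) else 0)"
      by (rule sum.cong[OF refl]) (auto simp: sum_distrib_left)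
    also have "\<dots> = (if a0 = a' \<and> b' \<in> B0 then F a0 b' * (\<Sum>b1\<in>B1. G a1 b1) else 0)"
      using assms(3) by simp
    finally show "(\<Sum>b0\<in>B0. \<Sum>b1\<in>B1. if a0 = a' \<and> b0 = b' then F a0 b0 * G a1 b1 else 0)
        = (if a0 = a' \<and> b' \<in> B0 then F a0 b' * (\<Sum>b1\<in>B1. G a1 b1) else 0)" .
  qed
  also have "\<dots> = (\<Sum>a0\<in>A0. if a' = a0 then (if b' \<in> B0 then F a0 b' * (\<Sum>a1\<in>A1. \<Sum>b1\<in>B1. G a1 b1) else 0) else 0)"
    by (rule sum.cong[OF refl]) (auto simp: sum_distrib_left)
  also have "\<dots> = (if a' \<in> A0 \<and> b' \<in> B0 then F a' b' else 0) * (\<Sum>a1\<in>A1. \<Sum>b1\<in>B1. G a1 b1)"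
    using assms(1) by simp
  finally show ?thesis .
qed

lemma sum_select_second_factor:
  fixes F G :: "'a \<Rightarrow> 'b \<Rightarrow> 'c::comm_semiring_0"
  assumes "finite A0" "finite A1" "finite B0" "finite B1"
  shows "(\<Sum>a0\<in>A0. \<Sum>a1\<in>A1. \<Sum>b0\<in>B0. \<Sum>b1\<in>B1. if a1 = a' \<and> b1 = b' then G a0 b0 * F a1 b1 else 0)
       = (if a' \<in> A1 \<and> b' \<in> B1 then F a' b' else 0) * (\<Sum>a0\<in>A0. \<Sum>b0\<in>B0. G a0 b0)"
proof -
  have "(\<Sum>a0\<in>A0. \<Sum>a1\<in>A1. \<Sum>b0\<in>B0. \<Sum>b1\<in>B1. if a1 = a' \<and> b1 = b' then G a0 b0 * F a1 b1 else 0)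
      = (\<Sum>a1\<in>A1. \<Sum>a0\<in>A0. \<Sum>b0\<in>B0. \<Sum>b1\<in>B1. if a1 = a' \<and> b1 = b' then G a0 b0 * F a1 b1 else 0)"
    by (rule sum.swap)
  also have "\<dots> = (\<Sum>a1\<in>A1. \<Sum>a0\<in>A0. \<Sum>b1\<in>B1. \<Sum>b0\<in>B0. if a1 = a' \<and> b1 = b' then F a1 b1 * G a0 b0 else 0)"
    by (rule sum.cong[OF refl], rule sum.cong[OF refl], subst sum.swap) (intro sum.cong refl, simp add: mult.commute)
  also have "\<dots> = (if a' \<in> A1 \<and> b' \<in> B1 then F a' b' else 0) * (\<Sum>a0\<in>A0. \<Sum>b0\<in>B0. G a0 b0)"
    by (rule sum_select_first_factor[OF assms(2,1,4,3)])
  finally show ?thesis .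
qed

lemma finite_family_convergent_subseq:
  fixes f :: "nat \<Rightarrow> 'c \<Rightarrow> real"
  assumes "finite C" "\<And>c. c \<in> C \<Longrightarrow> Bseq (\<lambda>k. f k c)"
  shows "\<exists>r. strict_mono r \<and> (\<forall>c\<in>C. convergent (\<lambda>k. f (r k) c))"
  using assms
proof (induction C rule: finite_induct)
  case empty
  show ?case by (rule exI[of _ id]) (simp add: strict_mono_def)
next
  case (insert c C)
  obtain r where r: "strict_mono r" "\<forall>c\<in>C. convergent (\<lambda>k. f (r k) c)"
    using insert.IH insert.prems by blast
  obtain r' where r': "strict_mono r'" "monoseq (\<lambda>k. f (r (r' k)) c)"
    using seq_monosub[of "\<lambda>k. f (r k) c"] by blast
  have "convergent (\<lambda>k. f ((r \<circ> r') k) c)"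
    using Bseq_monoseq_convergent[OF Bseq_subseq[OF insert.prems(1)[OF insertI1]] r'(2)]
    by (simp add: o_def)
  moreover have "convergent (\<lambda>k. f ((r \<circ> r') k) c')" if "c' \<in> C" for c'
    using convergent_subseq_convergent[OF bspec[OF r(2) that] r'(1)] by (simp add: o_def)
  ultimately show ?case
    using strict_mono_o[OF r(1) r'(1)] by blast
qed

lemma is_box_valid_scenario: "is_box s P \<Longrightarrow> valid_scenario s"
  unfolding is_box_def by blast

lemma is_box_nonneg: "is_box s P \<Longrightarrow> 0 \<le> P a b x y"
  unfolding is_box_def by blast

lemma is_box_outside:
  "is_box s P \<Longrightarrow> \<not> (a < nA s \<and> b < nB s \<and> x < nX s \<and> y < nY s) \<Longrightarrow> P a b x y = 0"
  unfolding is_box_def by blast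

lemma is_box_normalized:
  "is_box s P \<Longrightarrow> x < nX s \<Longrightarrow> y < nY s \<Longrightarrow> (\<Sum>a<nA s. \<Sum>b<nB s. P a b x y) = 1"
  unfolding is_box_def by blast

lemma is_box_le_1:
  assumes "is_box s P"
  shows "P a b x y \<le> 1"
proof (cases "a < nA s \<and> b < nB s \<and> x < nX s \<and> y < nY s")
  case True
  have "P a b x y \<le> (\<Sum>b'<nB s. P a b' x y)"
    using True by (intro member_le_sum) (auto intro: is_box_nonneg[OF assms])
  also have "\<dots> \<le> (\<Sum>a'<nA s. \<Sum>b'<nB s. P a' b' x y)"
    using True
    by (intro member_le_sum[where f = "\<lambda>a'. \<Sum>b'<nB s. P a' b' x y"])
       (auto intro: sum_nonneg is_box_nonneg[OF assms])
  also have "\<dots> = 1"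
    using True by (simp add: is_box_normalized[OF assms])
  finally show ?thesis .
qed (simp add: is_box_outside[OF assms])

lemma closed_corr_set_is_box: "closed_corr_set S \<Longrightarrow> P \<in> S s \<Longrightarrow> is_box s P"
  unfolding closed_corr_set_def no_signalling_def by blast

lemma closed_corr_set_convex:
  assumes "closed_corr_set S" "P \<in> S s" "Q \<in> S s" "0 \<le> c" "c \<le> 1"
  shows "(\<lambda>a b x y. c * P a b x y + (1 - c) * Q a b x y) \<in> S s"
  using assms unfolding closed_corr_set_def by blast

lemma closed_corr_set_compose:
  assumes "closed_corr_set S" "valid_scenario t" "\<forall>i<n. Ps i \<in> S (ss i)"
    "wf_wiring n (\<lambda>i. nX (ss i)) (\<lambda>i. nA (ss i)) (nX t) (nA t) WA"
    "wf_wiring n (\<lambda>i. nY (ss i)) (\<lambda>i. nB (ss i)) (nY t) (nB t) WB"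
  shows "compose n ss Ps t WA WB \<in> S t"
  using assms unfolding closed_corr_set_def by blast

lemma closed_corr_set_limit:
  assumes "closed_corr_set S" "\<And>k. R k \<in> S s" "\<And>a b x y. (\<lambda>k. R k a b x y) \<longlonglongrightarrow> L a b x y"
  shows "L \<in> S s"
  using assms unfolding closed_corr_set_def by blast

lemma plus_corr_commute: "plus_corr S1 S2 = plus_corr S2 S1"
  unfolding plus_corr_def by (simp add: Un_commute)

lemma plus_corr_subset:
  assumes "closed_corr_set S2" "\<And>s. S1 s \<subseteq> S2 s"
  shows "plus_corr S1 S2 s \<subseteq> S2 s"
  unfolding plus_corr_def using assms by blast

lemma inter_corr_eq_left_iff: "inter_corr S1 S2 = S1 \<longleftrightarrow> (\<forall>s. S1 s \<subseteq> S2 s)"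
  unfolding inter_corr_def by (auto simp: fun_eq_iff)

lemma inter_corr_eq_right_iff: "inter_corr S1 S2 = S2 \<longleftrightarrow> (\<forall>s. S2 s \<subseteq> S1 s)"
  unfolding inter_corr_def by (auto simp: fun_eq_iff)

definition cells :: "scenario \<Rightarrow> (nat \<times> nat \<times> nat \<times> nat) set" where
  "cells s = {..<nA s} \<times> {..<nB s} \<times> {..<nX s} \<times> {..<nY s}"

lemma finite_cells [simp]: "finite (cells s)"
  unfolding cells_def by simp

lemma mem_cells_iff: "(a, b, x, y) \<in> cells s \<longleftrightarrow> a < nA s \<and> b < nB s \<and> x < nX s \<and> y < nY s"
  unfolding cells_def by auto

lemma bell_value_cells: "bell_value s B P = (\<Sum>(a, b, x, y)\<in>cells s. B a b x y * P a b x y)"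
  unfolding bell_value_def cells_def by (simp add: sum.cartesian_product)

lemma bell_value_add_coeffs:
  "bell_value s (\<lambda>a b x y. B a b x y + C a b x y) P = bell_value s B P + bell_value s C P"
  unfolding bell_value_def by (simp add: distrib_right sum.distrib)

lemma bell_value_scale_coeffs:
  "bell_value s (\<lambda>a b x y. w * B a b x y) P = w * bell_value s B P"
  unfolding bell_value_def by (simp add: sum_distrib_left mult.assoc)

lemma bell_value_le_abs_sum:
  assumes "is_box s P"
  shows "bell_value s B P \<le> (\<Sum>(a, b, x, y)\<in>cells s. \<bar>B a b x y\<bar>)"
  unfolding bell_value_cells
proof (rule sum_mono, clarify)
  fix a b x y
  have "B a b x y * P a b x y \<le> \<bar>B a b x y\<bar> * P a b x y"
    using is_box_nonneg[OF assms] by (intro mult_right_mono) auto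
  also have "\<dots> \<le> \<bar>B a b x y\<bar>"
    using is_box_le_1[OF assms] by (simp add: mult_left_le)
  finally show "B a b x y * P a b x y \<le> \<bar>B a b x y\<bar>" .
qed

lemma closed_corr_set_bell_value_bdd_above:
  "closed_corr_set S \<Longrightarrow> bdd_above (bell_value s B ` S s)"
  by (rule bdd_aboveI2, rule bell_value_le_abs_sum, erule closed_corr_set_is_box)

lemma closed_corr_set_seq_compact:
  fixes R :: "nat \<Rightarrow> box"
  assumes cl: "closed_corr_set S" and R: "\<And>k. R k \<in> S s"
  obtains r L where "strict_mono r" "L \<in> S s"
    "\<And>a b x y. (\<lambda>k. R (r k) a b x y) \<longlonglongrightarrow> L a b x y"
proof -
  have box: "is_box s (R k)" for k
    using closed_corr_set_is_box[OF cl R] .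
  have bound: "\<bar>R k a b x y\<bar> \<le> 1" for k a b x y
    using is_box_nonneg[OF box, of k a b x y] is_box_le_1[OF box, of k a b x y] by simp
  have "\<exists>r. strict_mono r \<and> (\<forall>c\<in>cells s. convergent (\<lambda>k. (\<lambda>k (a, b, x, y). R k a b x y) (r k) c))"
  proof (rule finite_family_convergent_subseq[OF finite_cells, where f = "\<lambda>k (a, b, x, y). R k a b x y"])
    fix c :: "nat \<times> nat \<times> nat \<times> nat"
    show "Bseq (\<lambda>k. (\<lambda>k (a, b, x, y). R k a b x y) k c)"
      by (rule BseqI'[of _ 1]) (simp add: split_beta bound)
  qed
  then obtain r where r: "strict_mono r"
    and conv_cells: "\<forall>c\<in>cells s. convergent (\<lambda>k. (\<lambda>k (a, b, x, y). R k a b x y) (r k) c)"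
    by blast
  define L where "L a b x y = lim (\<lambda>k. R (r k) a b x y)" for a b x y
  have conv: "(\<lambda>k. R (r k) a b x y) \<longlonglongrightarrow> L a b x y" for a b x y
  proof -
    have "convergent (\<lambda>k. R (r k) a b x y)"
    proof (cases "(a, b, x, y) \<in> cells s")
      case False
      then have "(\<lambda>k. R (r k) a b x y) = (\<lambda>k. 0)"
        using is_box_outside[OF box] by (auto simp: mem_cells_iff)
      then show ?thesis by (simp add: convergent_const)
    next
      case True
      from bspec[OF conv_cells True] show ?thesis by simp
    qed
    then show ?thesis unfolding L_def by (simp add: convergent_LIMSEQ_iff)
  qed
  show thesis
    using that[OF r closed_corr_set_limit[OF cl R conv]] conv by blast
qed

definition sq_dist :: "scenario \<Rightarrow> box \<Rightarrow> box \<Rightarrow> real" where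
  "sq_dist s P Q = (\<Sum>(a, b, x, y)\<in>cells s. (P a b x y - Q a b x y)\<^sup>2)"

lemma closed_corr_set_nearest_point:
  assumes cl: "closed_corr_set S" and ne: "S s \<noteq> {}"
  obtains L where "L \<in> S s" "\<And>R. R \<in> S s \<Longrightarrow> sq_dist s L P \<le> sq_dist s R P"
proof -
  define d where "d = Inf ((\<lambda>R. sq_dist s R P) ` S s)"
  have bdd: "bdd_below ((\<lambda>R. sq_dist s R P) ` S s)"
    by (rule bdd_belowI[of _ 0]) (auto simp: sq_dist_def intro!: sum_nonneg)
  have d_le: "d \<le> sq_dist s R P" if "R \<in> S s" for R
    unfolding d_def using bdd that by (simp add: cInf_lower)
  have "\<exists>R. \<forall>k. R k \<in> S s \<and> sq_dist s (R k) P < d + inverse (real (Suc k))"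
  proof (rule choice, rule allI)
    fix k
    have "d < d + inverse (real (Suc k))" by simp
    then show "\<exists>R. R \<in> S s \<and> sq_dist s R P < d + inverse (real (Suc k))"
      using cInf_less_iff[OF _ bdd] ne unfolding d_def by blast
  qed
  then obtain R where "\<forall>k. R k \<in> S s \<and> sq_dist s (R k) P < d + inverse (real (Suc k))" ..
  then have R: "\<And>k. R k \<in> S s" "\<And>k. sq_dist s (R k) P < d + inverse (real (Suc k))"
    by simp_all
  have "(\<lambda>k. sq_dist s (R k) P) \<longlonglongrightarrow> d"
  proof (rule tendsto_sandwich[of "\<lambda>k. d" _ _ "\<lambda>k. d + inverse (real (Suc k))"])
    show "\<forall>\<^sub>F k in sequentially. d \<le> sq_dist s (R k) P"
      using d_le R(1) by simp
    show "\<forall>\<^sub>F k in sequentially. sq_dist s (R k) P \<le> d + inverse (real (Suc k))"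
      using R(2) by (simp add: less_imp_le)
    show "(\<lambda>k. d + inverse (real (Suc k))) \<longlonglongrightarrow> d"
      by (rule LIMSEQ_inverse_real_of_nat_add)
  qed simp
  moreover obtain r L where r: "strict_mono r" and L: "L \<in> S s"
    and conv: "\<And>a b x y. (\<lambda>k. R (r k) a b x y) \<longlonglongrightarrow> L a b x y"
    using closed_corr_set_seq_compact[where R = R, OF cl R(1)] by blast
  ultimately have "(\<lambda>k. sq_dist s (R (r k)) P) \<longlonglongrightarrow> d"
    using LIMSEQ_subseq_LIMSEQ unfolding o_def by blast
  moreover have "(\<lambda>k. sq_dist s (R (r k)) P) \<longlonglongrightarrow> sq_dist s L P"
    unfolding sq_dist_def by (auto intro!: tendsto_intros conv simp: split_beta)
  ultimately have "d = sq_dist s L P"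
    by (rule LIMSEQ_unique)
  then show thesis
    using that[OF L] d_le by simp
qed

text \<open>The variational inequality of the Euclidean projection onto a convex set.\<close>
lemma nearest_point_separates:
  assumes cl: "closed_corr_set S" and L: "L \<in> S s" and R: "R \<in> S s"
    and nearest: "\<And>R. R \<in> S s \<Longrightarrow> sq_dist s L P \<le> sq_dist s R P"
  shows "bell_value s (\<lambda>a b x y. P a b x y - L a b x y) R
    \<le> bell_value s (\<lambda>a b x y. P a b x y - L a b x y) L"
proof (rule ccontr)
  define A where "A = (\<Sum>(a, b, x, y)\<in>cells s. (P a b x y - L a b x y) * (R a b x y - L a b x y))"
  define E where "E = sq_dist s R L"
  have A_eq: "A = bell_value s (\<lambda>a b x y. P a b x y - L a b x y) R
      - bell_value s (\<lambda>a b x y. P a b x y - L a b x y) L"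
    unfolding A_def bell_value_cells
    by (simp add: sum_subtractf[symmetric] split_beta algebra_simps)
  assume "\<not> ?thesis"
  then have A_pos: "0 < A" unfolding A_eq by simp
  have E_nonneg: "0 \<le> E" unfolding E_def sq_dist_def by (auto intro!: sum_nonneg)
  define t where "t = min 1 (A / (E + 1))"
  have t: "0 < t" "t \<le> 1" using A_pos E_nonneg unfolding t_def by auto
  define M where "M a b x y = t * R a b x y + (1 - t) * L a b x y" for a b x y
  have "sq_dist s M P = sq_dist s L P - 2 * t * A + t\<^sup>2 * E"
  proof -
    have "sq_dist s M P = (\<Sum>c\<in>cells s. (case c of (a, b, x, y) \<Rightarrow> (L a b x y - P a b x y)\<^sup>2)
        - 2 * t * (case c of (a, b, x, y) \<Rightarrow> (P a b x y - L a b x y) * (R a b x y - L a b x y))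
        + t\<^sup>2 * (case c of (a, b, x, y) \<Rightarrow> (R a b x y - L a b x y)\<^sup>2))"
      unfolding sq_dist_def M_def
      by (rule sum.cong) (auto simp: power2_eq_square algebra_simps)
    also have "\<dots> = sq_dist s L P - 2 * t * A + t\<^sup>2 * E"
      unfolding sq_dist_def A_def E_def
      by (simp add: sum.distrib sum_subtractf sum_distrib_left)
    finally show ?thesis .
  qed
  moreover have "sq_dist s L P \<le> sq_dist s M P"
    using nearest closed_corr_set_convex[OF cl R L t(1)[THEN less_imp_le] t(2)]
    unfolding M_def by blast
  ultimately have "0 \<le> t * (t * E - 2 * A)"
    by (simp add: power2_eq_square algebra_simps)
  then have "2 * A \<le> t * E"
    using t by (simp add: zero_le_mult_iff)
  moreover have "t * E \<le> A / (E + 1) * E"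
    using E_nonneg unfolding t_def by (intro mult_right_mono) auto
  moreover have "A / (E + 1) * E \<le> A"
    using A_pos E_nonneg by (simp add: field_simps)
  ultimately show False
    using A_pos by linarith
qed

lemma closed_corr_set_separation:
  assumes cl: "closed_corr_set S" and P: "is_box s P" "P \<notin> S s"
  obtains B K where "compatible S s B K" "K < bell_value s B P"
proof (cases "S s = {}")
  case True
  then show thesis
    using that[of "\<lambda>a b x y. 0" "-1"] by (simp add: compatible_def bell_value_def)
next
  case False
  then obtain L where L: "L \<in> S s" and nearest: "\<And>R. R \<in> S s \<Longrightarrow> sq_dist s L P \<le> sq_dist s R P"
    using closed_corr_set_nearest_point[OF cl] by blast
  define B where "B a b x y = P a b x y - L a b x y" for a b x y
  have "compatible S s B (bell_value s B L)"
    unfolding compatible_def B_def using nearest_point_separates[OF cl L _ nearest] by blast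
  moreover have "bell_value s B L < bell_value s B P"
  proof -
    obtain a b x y where ne: "P a b x y \<noteq> L a b x y"
      using L P(2) by (metis ext)
    then have cell: "(a, b, x, y) \<in> cells s"
      using is_box_outside[OF P(1)] is_box_outside[OF closed_corr_set_is_box[OF cl L]]
      unfolding mem_cells_iff by metis
    have "0 < sq_dist s P L"
      unfolding sq_dist_def by (rule sum_pos2[OF finite_cells cell]) (use ne in auto)
    also have "sq_dist s P L = bell_value s B P - bell_value s B L"
      unfolding sq_dist_def bell_value_cells B_def
      by (simp add: sum_subtractf[symmetric] split_beta power2_eq_square algebra_simps)
    finally show ?thesis by simp
  qed
  ultimately show thesis by (rule that)
qed

text \<open>The margin \<open>3/4\<close> only has to exceed \<open>1/2\<close>: adding two such inequalities, each closed set stays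
  below \<open>K1 + K2 + 1\<close>, while combining the two witnesses exceeds \<open>K1 + K2 + 3/2\<close>.\<close>
lemma closed_corr_set_normalized_separation:
  assumes cl1: "closed_corr_set S1" and cl2: "closed_corr_set S2" and P0: "P0 \<in> S1 s" "P0 \<notin> S2 s"
  obtains B K P where "compatible S2 s B K" "compatible S1 s B (K + 1)"
    "P \<in> S1 s" "K + 3 / 4 < bell_value s B P"
proof -
  obtain C K0 where sep: "compatible S2 s C K0" "K0 < bell_value s C P0"
    using closed_corr_set_separation[OF cl2 closed_corr_set_is_box[OF cl1 P0(1)] P0(2)] .
  define m where "m = Sup (bell_value s C ` S1 s)"
  have le_m: "bell_value s C R \<le> m" if "R \<in> S1 s" for R
    unfolding m_def using closed_corr_set_bell_value_bdd_above[OF cl1] that by (intro cSup_upper) auto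
  have K0_m: "K0 < m"
    using le_m[OF P0(1)] sep(2) by linarith
  then have "(3 * m + K0) / 4 < Sup (bell_value s C ` S1 s)"
    unfolding m_def[symmetric] by simp
  then obtain P where P: "P \<in> S1 s" "(3 * m + K0) / 4 < bell_value s C P"
    using less_cSup_iff[OF _ closed_corr_set_bell_value_bdd_above[OF cl1]] P0(1) by blast
  define w where "w = 1 / (m - K0)"
  have w: "0 < w" "w * m = w * K0 + 1"
    using K0_m unfolding w_def by (auto simp: field_simps)
  show thesis
  proof (rule that[of "\<lambda>a b x y. w * C a b x y" "w * K0" P])
    show "compatible S2 s (\<lambda>a b x y. w * C a b x y) (w * K0)"
      using sep(1) w(1) by (simp add: compatible_def bell_value_scale_coeffs)
    show "compatible S1 s (\<lambda>a b x y. w * C a b x y) (w * K0 + 1)"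
      using le_m w by (simp add: compatible_def bell_value_scale_coeffs flip: w(2))
    have "w * K0 + 3 / 4 = w * ((3 * m + K0) / 4)"
      using w(2) by (simp add: field_simps)
    also have "\<dots> < w * bell_value s C P"
      using P(2) w(1) by simp
    finally show "w * K0 + 3 / 4 < bell_value s (\<lambda>a b x y. w * C a b x y) P"
      by (simp add: bell_value_scale_coeffs)
  qed (rule P(1))
qed

definition clip :: "nat \<Rightarrow> nat \<Rightarrow> nat" where
  "clip n a = (if a < n then a else 0)"

lemma clip_less: "0 < n \<Longrightarrow> clip n a < n"
  unfolding clip_def by auto

text \<open>Shifting the inputs by \<open>(ox, oy)\<close> and merging the outputs outside the smaller alphabets
  into output 0 is a wiring of the single box \<open>R\<close>; see \<open>compose_relabel_wiring\<close>.\<close>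
definition block_marginal :: "scenario \<Rightarrow> scenario \<Rightarrow> nat \<Rightarrow> nat \<Rightarrow> box \<Rightarrow> box" where
  "block_marginal s sc ox oy R = (\<lambda>a' b' x y.
     if a' < nA sc \<and> b' < nB sc \<and> x < nX sc \<and> y < nY sc then
       (\<Sum>a<nA s. \<Sum>b<nB s. if clip (nA sc) a = a' \<and> clip (nB sc) b = b' then R a b (x + ox) (y + oy) else 0)
     else 0)"

definition relabel_wiring :: "(nat \<Rightarrow> nat) \<Rightarrow> (nat \<Rightarrow> nat) \<Rightarrow> wiring" where
  "relabel_wiring f g = (\<lambda>x h. if h = [] then Query 0 (f x) else Output (g (snd (snd (hd h)))))"

lemma wf_relabel_wiring:
  assumes "\<And>x. x < nin \<Longrightarrow> f x < m" "\<And>r. r < k \<Longrightarrow> g r < nout"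
  shows "wf_wiring (Suc 0) (\<lambda>i. m) (\<lambda>i. k) nin nout (relabel_wiring f g)"
  unfolding wf_wiring_def
proof (intro allI impI)
  fix x h assume x: "x < nin" and h: "valid_history (Suc 0) (\<lambda>i. m) (\<lambda>i. k) h"
  show "case relabel_wiring f g x h of Query i u \<Rightarrow> i < Suc 0 \<and> i \<notin> fst ` set h \<and> u < m
        | Output r \<Rightarrow> r < nout"
  proof (cases "h = []")
    case False
    then have "snd (snd (hd h)) < k"
      using h hd_in_set unfolding valid_history_def by fastforce
    then show ?thesis using False assms by (simp add: relabel_wiring_def)
  qed (use assms x in \<open>simp add: relabel_wiring_def\<close>)
qed

lemma wiring_output_relabel_wiring: "wiring_output (relabel_wiring f g) (Suc 0) x oa = g (oa 0)"
  by (simp add: wiring_output_def relabel_wiring_def)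

lemma wiring_inputs_relabel_wiring: "wiring_inputs (relabel_wiring f g) (Suc 0) x oa 0 = f x"
  by (simp add: wiring_inputs_def relabel_wiring_def)

lemma compose_relabel_wiring:
  "compose (Suc 0) (\<lambda>_. s) (\<lambda>_. R) sc
      (relabel_wiring (\<lambda>x. x + ox) (clip (nA sc))) (relabel_wiring (\<lambda>y. y + oy) (clip (nB sc)))
    = block_marginal s sc ox oy R"
proof (intro ext)
  fix a' b' x y
  show "compose (Suc 0) (\<lambda>_. s) (\<lambda>_. R) sc (relabel_wiring (\<lambda>x. x + ox) (clip (nA sc)))
      (relabel_wiring (\<lambda>y. y + oy) (clip (nB sc))) a' b' x y = block_marginal s sc ox oy R a' b' x y"
  proof (cases "a' < nA sc \<and> b' < nB sc \<and> x < nX sc \<and> y < nY sc")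
    case True
    let ?summand = "\<lambda>a b. if clip (nA sc) a = a' \<and> clip (nB sc) b = b' then R a b (x + ox) (y + oy) else 0"
    have "compose (Suc 0) (\<lambda>_. s) (\<lambda>_. R) sc (relabel_wiring (\<lambda>x. x + ox) (clip (nA sc)))
        (relabel_wiring (\<lambda>y. y + oy) (clip (nB sc))) a' b' x y
      = (\<Sum>oa\<in>PiE {..<Suc 0} (\<lambda>_. {..<nA s}). \<Sum>ob\<in>PiE {..<Suc 0} (\<lambda>_. {..<nB s}). ?summand (oa 0) (ob 0))"
      using True by (simp add: compose_def wiring_output_relabel_wiring wiring_inputs_relabel_wiring cong: if_cong)
    also have "\<dots> = (\<Sum>a<nA s. \<Sum>ob\<in>PiE {..<Suc 0} (\<lambda>_. {..<nB s}). ?summand a (ob 0))"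
      by (rule sum_PiE_lessThan_1)
    also have "\<dots> = (\<Sum>a<nA s. \<Sum>b<nB s. ?summand a b)"
      by (intro sum.cong refl sum_PiE_lessThan_1)
    finally show ?thesis
      using True by (simp add: block_marginal_def)
  next
    case False
    then show ?thesis
      by (simp only: compose_def block_marginal_def if_False)
  qed
qed

lemma closed_corr_set_block_marginal:
  assumes S: "closed_corr_set S" "R \<in> S s" and sc: "valid_scenario sc"
    and fits: "ox + nX sc \<le> nX s" "oy + nY sc \<le> nY s"
  shows "block_marginal s sc ox oy R \<in> S sc"
proof -
  have "0 < nA sc" "0 < nB sc" using sc unfolding valid_scenario_def by auto
  then have "compose (Suc 0) (\<lambda>_. s) (\<lambda>_. R) sc
      (relabel_wiring (\<lambda>x. x + ox) (clip (nA sc))) (relabel_wiring (\<lambda>y. y + oy) (clip (nB sc))) \<in> S sc"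
    using S fits by (intro closed_corr_set_compose[OF S(1) sc]) (auto intro!: wf_relabel_wiring clip_less)
  then show ?thesis
    by (simp only: compose_relabel_wiring)
qed

lemma block_marginal_of_embedded_box:
  assumes Q: "is_box sc Q" and outputs: "nA sc \<le> nA s" "nB sc \<le> nB s"
    and embedded: "\<And>a b x y. a < nA s \<Longrightarrow> b < nB s \<Longrightarrow> x < nX sc \<Longrightarrow> y < nY sc
      \<Longrightarrow> R a b (x + ox) (y + oy) = Q a b x y"
  shows "block_marginal s sc ox oy R = Q"
proof (intro ext)
  fix a' b' x y
  show "block_marginal s sc ox oy R a' b' x y = Q a' b' x y"
  proof (cases "a' < nA sc \<and> b' < nB sc \<and> x < nX sc \<and> y < nY sc")
    case True
    have "(if clip (nA sc) a = a' \<and> clip (nB sc) b = b' then R a b (x + ox) (y + oy) else 0)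
        = (if a' = a \<and> b' = b then Q a b x y else 0)" if "a < nA s" "b < nB s" for a b
      using True that embedded[of a b x y] is_box_outside[OF Q, of a b x y]
      by (auto simp: clip_def)
    then have "block_marginal s sc ox oy R a' b' x y
        = (\<Sum>a<nA s. \<Sum>b<nB s. if a' = a \<and> b' = b then Q a b x y else 0)"
      using True unfolding block_marginal_def by (auto intro!: sum.cong)
    also have "\<dots> = Q a' b' x y"
      using True outputs by (intro sum_delta_pair) auto
    finally show ?thesis .
  qed (use is_box_outside[OF Q] in \<open>auto simp: block_marginal_def\<close>)
qed

definition block_coeffs :: "scenario \<Rightarrow> box \<Rightarrow> nat \<Rightarrow> nat \<Rightarrow> box" where
  "block_coeffs sc B ox oy = (\<lambda>a b x y.
     if ox \<le> x \<and> x < ox + nX sc \<and> oy \<le> y \<and> y < oy + nY sc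
     then B (clip (nA sc) a) (clip (nB sc) b) (x - ox) (y - oy) else 0)"

lemma bell_value_block_coeffs_expand:
  assumes "ox + nX sc \<le> nX s" "oy + nY sc \<le> nY s"
  shows "bell_value s (block_coeffs sc B ox oy) R = (\<Sum>a<nA s. \<Sum>b<nB s. \<Sum>x<nX sc. \<Sum>y<nY sc.
    B (clip (nA sc) a) (clip (nB sc) b) x y * R a b (x + ox) (y + oy))"
  unfolding bell_value_def
proof (rule sum.cong[OF refl], rule sum.cong[OF refl])
  fix a b
  let ?B = "B (clip (nA sc) a) (clip (nB sc) b)"
  have "(\<Sum>x<nX s. \<Sum>y<nY s. block_coeffs sc B ox oy a b x y * R a b x y)
     = (\<Sum>x<nX s. if ox \<le> x \<and> x < ox + nX sc then (\<Sum>y<nY s. if oy \<le> y \<and> y < oy + nY sc then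
          ?B (x - ox) (y - oy) * R a b x y else 0) else 0)"
    by (intro sum.cong refl) (auto simp: block_coeffs_def intro!: sum.cong)
  also have "\<dots> = (\<Sum>x<nX sc. \<Sum>y<nY s. if oy \<le> y \<and> y < oy + nY sc then
          ?B x (y - oy) * R a b (x + ox) y else 0)"
    by (subst sum_window_shift[OF assms(1)]) (simp cong: if_cong)
  also have "\<dots> = (\<Sum>x<nX sc. \<Sum>y<nY sc. ?B x y * R a b (x + ox) (y + oy))"
    by (rule sum.cong[OF refl], subst sum_window_shift[OF assms(2)]) (simp cong: if_cong)
  finally show "(\<Sum>x<nX s. \<Sum>y<nY s. block_coeffs sc B ox oy a b x y * R a b x y)
     = (\<Sum>x<nX sc. \<Sum>y<nY sc. ?B x y * R a b (x + ox) (y + oy))" .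
qed

lemma bell_value_block_marginal_expand:
  assumes "0 < nA sc" "0 < nB sc"
  shows "bell_value sc B (block_marginal s sc ox oy R) = (\<Sum>x<nX sc. \<Sum>y<nY sc. \<Sum>a<nA s. \<Sum>b<nB s.
    B (clip (nA sc) a) (clip (nB sc) b) x y * R a b (x + ox) (y + oy))"
proof -
  let ?R = "\<lambda>a' b' x y. \<Sum>a<nA s. \<Sum>b<nB s.
    if clip (nA sc) a = a' \<and> clip (nB sc) b = b' then R a b (x + ox) (y + oy) else 0"
  have "bell_value sc B (block_marginal s sc ox oy R)
      = (\<Sum>a'<nA sc. \<Sum>b'<nB sc. \<Sum>x<nX sc. \<Sum>y<nY sc. B a' b' x y * ?R a' b' x y)"
    unfolding bell_value_def block_marginal_def by (intro sum.cong refl) simp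
  also have "\<dots> = (\<Sum>x<nX sc. \<Sum>y<nY sc. \<Sum>a'<nA sc. \<Sum>b'<nB sc. B a' b' x y * ?R a' b' x y)"
    by (rule sum_swap_pairs)
  also have "\<dots> = (\<Sum>x<nX sc. \<Sum>y<nY sc. \<Sum>a<nA s. \<Sum>b<nB s.
      B (clip (nA sc) a) (clip (nB sc) b) x y * R a b (x + ox) (y + oy))"
    by (intro sum.cong refl sum_fibres_pair) (auto simp: clip_less assms)
  finally show ?thesis .
qed

lemma bell_value_block_coeffs:
  assumes "ox + nX sc \<le> nX s" "oy + nY sc \<le> nY s" "0 < nA sc" "0 < nB sc"
  shows "bell_value s (block_coeffs sc B ox oy) R = bell_value sc B (block_marginal s sc ox oy R)"
  unfolding bell_value_block_coeffs_expand[OF assms(1,2)] bell_value_block_marginal_expand[OF assms(3,4)]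
  by (rule sum_swap_pairs)

definition side_by_side :: "scenario \<Rightarrow> scenario \<Rightarrow> scenario" where
  "side_by_side s1 s2 = Scen (nX s1 + nX s2) (nY s1 + nY s2) (max (nA s1) (nA s2)) (max (nB s1) (nB s2))"

lemma valid_scenario_side_by_side:
  "valid_scenario s1 \<Longrightarrow> valid_scenario s2 \<Longrightarrow> valid_scenario (side_by_side s1 s2)"
  unfolding side_by_side_def valid_scenario_def by auto

definition switch_wiring :: "nat \<Rightarrow> wiring" where
  "switch_wiring m = (\<lambda>x h.
     if h = [] then (if x < m then Query 0 x else Query (Suc 0) (x - m)) else Output (snd (snd (hd h))))"

lemma wf_switch_wiring:
  fixes m k nout :: nat
  assumes "inp 0 = m" "inp (Suc 0) = k" "outp 0 \<le> nout" "outp (Suc 0) \<le> nout"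
  shows "wf_wiring (Suc (Suc 0)) inp outp (m + k) nout (switch_wiring m)"
  unfolding wf_wiring_def
proof (intro allI impI)
  fix x h assume x: "x < m + k" and h: "valid_history (Suc (Suc 0)) inp outp h"
  show "case switch_wiring m x h of Query i u \<Rightarrow> i < Suc (Suc 0) \<and> i \<notin> fst ` set h \<and> u < inp i
        | Output r \<Rightarrow> r < nout"
  proof (cases "h = []")
    case True then show ?thesis using assms x by (auto simp: switch_wiring_def)
  next
    case False
    then have hh: "hd h \<in> set h" by simp
    obtain i u r where hd: "hd h = (i, u, r)" by (metis prod_cases3)
    have "i < Suc (Suc 0)" "r < outp i" using h hh hd unfolding valid_history_def by auto
    then have "r < nout" using assms by (auto simp: less_Suc_eq)
    then show ?thesis using False hd by (simp add: switch_wiring_def)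
  qed
qed

lemma wiring_output_switch_wiring:
  "wiring_output (switch_wiring m) (Suc (Suc 0)) x oa = (if x < m then oa 0 else oa (Suc 0))"
  by (simp add: wiring_output_def switch_wiring_def)

lemma wiring_inputs_switch_wiring:
  "wiring_inputs (switch_wiring m) (Suc (Suc 0)) x oa i =
    (if x < m then (if i = 0 then x else 0) else (if i = Suc 0 then x - m else 0))"
  by (simp add: wiring_inputs_def switch_wiring_def)

definition switch_box :: "scenario \<Rightarrow> scenario \<Rightarrow> box \<Rightarrow> box \<Rightarrow> box" where
  "switch_box s1 s2 P Q = compose (Suc (Suc 0)) (\<lambda>i. if i = 0 then s1 else s2) (\<lambda>i. if i = 0 then P else Q)
     (side_by_side s1 s2) (switch_wiring (nX s1)) (switch_wiring (nY s1))"

lemma switch_box_first_block: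
  assumes P: "is_box s1 P" and Q: "is_box s2 Q"
    and r: "a' < nA (side_by_side s1 s2)" "b' < nB (side_by_side s1 s2)" "x < nX s1" "y < nY s1"
  shows "switch_box s1 s2 P Q a' b' x y = P a' b' x y"
proof -
  have v2: "0 < nX s2" "0 < nY s2" using Q unfolding is_box_def valid_scenario_def by auto
  have "switch_box s1 s2 P Q a' b' x y = (\<Sum>oa\<in>PiE {..<Suc (Suc 0)} (\<lambda>i. {..<nA (if i = 0 then s1 else s2)}).
        \<Sum>ob\<in>PiE {..<Suc (Suc 0)} (\<lambda>i. {..<nB (if i = 0 then s1 else s2)}).
        if oa 0 = a' \<and> ob 0 = b' then P (oa 0) (ob 0) x y * Q (oa (Suc 0)) (ob (Suc 0)) 0 0 else 0)"
    using r unfolding switch_box_def compose_def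
    by (simp add: wiring_output_switch_wiring wiring_inputs_switch_wiring prod.lessThan_Suc side_by_side_def cong: if_cong)
  also have "\<dots> = (\<Sum>a0<nA s1. \<Sum>a1<nA s2. \<Sum>b0<nB s1. \<Sum>b1<nB s2.
        if a0 = a' \<and> b0 = b' then P a0 b0 x y * Q a1 b1 0 0 else 0)"
    by (subst sum_PiE_lessThan_2_nested) simp
  also have "\<dots> = (if a' \<in> {..<nA s1} \<and> b' \<in> {..<nB s1} then P a' b' x y else 0) * (\<Sum>a1<nA s2. \<Sum>b1<nB s2. Q a1 b1 0 0)"
    by (rule sum_select_first_factor) auto
  also have "\<dots> = P a' b' x y"
    using is_box_normalized[OF Q v2] is_box_outside[OF P, of a' b' x y] r by auto
  finally show ?thesis .
qed

lemma switch_box_second_block: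
  assumes P: "is_box s1 P" and Q: "is_box s2 Q"
    and r: "a' < nA (side_by_side s1 s2)" "b' < nB (side_by_side s1 s2)" "x < nX s2" "y < nY s2"
  shows "switch_box s1 s2 P Q a' b' (x + nX s1) (y + nY s1) = Q a' b' x y"
proof -
  have v1: "0 < nX s1" "0 < nY s1" using P unfolding is_box_def valid_scenario_def by auto
  have "switch_box s1 s2 P Q a' b' (x + nX s1) (y + nY s1)
      = (\<Sum>oa\<in>PiE {..<Suc (Suc 0)} (\<lambda>i. {..<nA (if i = 0 then s1 else s2)}).
        \<Sum>ob\<in>PiE {..<Suc (Suc 0)} (\<lambda>i. {..<nB (if i = 0 then s1 else s2)}).
        if oa (Suc 0) = a' \<and> ob (Suc 0) = b' then P (oa 0) (ob 0) 0 0 * Q (oa (Suc 0)) (ob (Suc 0)) x y else 0)"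
    using r unfolding switch_box_def compose_def
    by (simp add: wiring_output_switch_wiring wiring_inputs_switch_wiring prod.lessThan_Suc side_by_side_def
        cong: if_cong)
  also have "\<dots> = (\<Sum>a0<nA s1. \<Sum>a1<nA s2. \<Sum>b0<nB s1. \<Sum>b1<nB s2.
        if a1 = a' \<and> b1 = b' then P a0 b0 0 0 * Q a1 b1 x y else 0)"
    by (subst sum_PiE_lessThan_2_nested) simp
  also have "\<dots> = (if a' \<in> {..<nA s2} \<and> b' \<in> {..<nB s2} then Q a' b' x y else 0)
      * (\<Sum>a0<nA s1. \<Sum>b0<nB s1. P a0 b0 0 0)"
    by (rule sum_select_second_factor) auto
  also have "\<dots> = Q a' b' x y"
    using is_box_normalized[OF P v1] is_box_outside[OF Q, of a' b' x y] r by auto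
  finally show ?thesis .
qed

definition side_by_side_coeffs :: "scenario \<Rightarrow> scenario \<Rightarrow> box \<Rightarrow> box \<Rightarrow> box" where
  "side_by_side_coeffs s1 s2 B1 B2 =
     (\<lambda>a b x y. block_coeffs s1 B1 0 0 a b x y + block_coeffs s2 B2 (nX s1) (nY s1) a b x y)"

lemma bell_value_side_by_side_coeffs:
  assumes "valid_scenario s1" "valid_scenario s2"
  shows "bell_value (side_by_side s1 s2) (side_by_side_coeffs s1 s2 B1 B2) R
    = bell_value s1 B1 (block_marginal (side_by_side s1 s2) s1 0 0 R)
      + bell_value s2 B2 (block_marginal (side_by_side s1 s2) s2 (nX s1) (nY s1) R)"
  using assms unfolding side_by_side_coeffs_def valid_scenario_def
  by (simp add: bell_value_add_coeffs bell_value_block_coeffs side_by_side_def)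

lemma compatible_side_by_side:
  assumes S: "closed_corr_set S" and s1: "valid_scenario s1" and s2: "valid_scenario s2"
    and compat: "compatible S s1 B1 K1" "compatible S s2 B2 K2"
  shows "compatible S (side_by_side s1 s2) (side_by_side_coeffs s1 s2 B1 B2) (K1 + K2)"
  unfolding compatible_def
proof
  fix R assume R: "R \<in> S (side_by_side s1 s2)"
  have "block_marginal (side_by_side s1 s2) s1 0 0 R \<in> S s1"
    by (rule closed_corr_set_block_marginal[OF S R s1]) (simp_all add: side_by_side_def)
  moreover have "block_marginal (side_by_side s1 s2) s2 (nX s1) (nY s1) R \<in> S s2"
    by (rule closed_corr_set_block_marginal[OF S R s2]) (simp_all add: side_by_side_def)
  ultimately show "bell_value (side_by_side s1 s2) (side_by_side_coeffs s1 s2 B1 B2) R \<le> K1 + K2"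
    using compat unfolding bell_value_side_by_side_coeffs[OF s1 s2] compatible_def
    by (intro add_mono) auto
qed

lemma bell_value_switch_box:
  assumes P: "is_box s1 P" and Q: "is_box s2 Q"
  shows "bell_value (side_by_side s1 s2) (side_by_side_coeffs s1 s2 B1 B2) (switch_box s1 s2 P Q)
    = bell_value s1 B1 P + bell_value s2 B2 Q"
proof -
  have "block_marginal (side_by_side s1 s2) s1 0 0 (switch_box s1 s2 P Q) = P"
    by (rule block_marginal_of_embedded_box[OF P]) (auto simp: side_by_side_def switch_box_first_block[OF P Q])
  moreover have "block_marginal (side_by_side s1 s2) s2 (nX s1) (nY s1) (switch_box s1 s2 P Q) = Q"
    by (rule block_marginal_of_embedded_box[OF Q]) (auto simp: side_by_side_def switch_box_second_block[OF P Q])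
  ultimately show ?thesis
    using is_box_valid_scenario[OF P] is_box_valid_scenario[OF Q]
    by (simp add: bell_value_side_by_side_coeffs)
qed

lemma switch_box_in_plus_corr:
  assumes P: "P \<in> S1 s1" and Q: "Q \<in> S2 s2" and s1: "valid_scenario s1" and s2: "valid_scenario s2"
  shows "switch_box s1 s2 P Q \<in> plus_corr S1 S2 (side_by_side s1 s2)"
  unfolding plus_corr_def
proof (intro InterI, elim CollectE exE conjE)
  fix U T assume U: "U = T (side_by_side s1 s2)" and T: "closed_corr_set T"
    and sub: "\<forall>s. S1 s \<union> S2 s \<subseteq> T s"
  from valid_scenario_side_by_side[OF s1 s2]
  show "switch_box s1 s2 P Q \<in> U"
    unfolding U switch_box_def
    using sub P Q
    by (intro closed_corr_set_compose[OF T]; (unfold side_by_side_def scenario.sel)?)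
       (auto simp: less_Suc_eq intro!: wf_switch_wiring)
qed

lemma incomparable_if_unstable:
  assumes "\<not> stable_under_composition s B K"
  shows "\<exists>S1 S2. closed_corr_set S1 \<and> closed_corr_set S2
    \<and> \<not> (\<forall>s. S1 s \<subseteq> S2 s) \<and> \<not> (\<forall>s. S2 s \<subseteq> S1 s)"
proof -
  obtain S1 S2 where S: "closed_corr_set S1" "closed_corr_set S2"
    and compat: "compatible S1 s B K" "compatible S2 s B K"
    and incompat: "\<not> compatible (plus_corr S1 S2) s B K"
    using assms unfolding stable_under_composition_def by blast
  have "\<not> compatible S s B K" if "closed_corr_set S" "plus_corr S1 S2 s \<subseteq> S s" for S
    using incompat that unfolding compatible_def by blast
  then show ?thesis
    using S compat plus_corr_subset[of S2 S1] plus_corr_subset[of S1 S2] plus_corr_commute[of S1 S2]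
    by metis
qed

lemma unstable_if_incomparable:
  assumes S1: "closed_corr_set S1" and S2: "closed_corr_set S2"
    and P0: "P0 \<in> S1 s1" "P0 \<notin> S2 s1" and Q0: "Q0 \<in> S2 s2" "Q0 \<notin> S1 s2"
  shows "\<exists>s B K. valid_scenario s \<and> \<not> stable_under_composition s B K"
proof -
  obtain B1 K1 P where sep1: "compatible S2 s1 B1 K1" "compatible S1 s1 B1 (K1 + 1)"
    and P: "P \<in> S1 s1" "K1 + 3 / 4 < bell_value s1 B1 P"
    using closed_corr_set_normalized_separation[OF S1 S2 P0] .
  obtain B2 K2 Q where sep2: "compatible S1 s2 B2 K2" "compatible S2 s2 B2 (K2 + 1)"
    and Q: "Q \<in> S2 s2" "K2 + 3 / 4 < bell_value s2 B2 Q"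
    using closed_corr_set_normalized_separation[OF S2 S1 Q0] .
  have s1: "valid_scenario s1" and s2: "valid_scenario s2"
    using is_box_valid_scenario closed_corr_set_is_box S1 S2 P0(1) Q0(1) by blast+
  define t where "t = side_by_side s1 s2"
  define B where "B = side_by_side_coeffs s1 s2 B1 B2"
  have "compatible S1 t B (K1 + 1 + K2)" "compatible S2 t B (K1 + (K2 + 1))"
    unfolding t_def B_def using S1 S2 s1 s2 sep1 sep2 by (auto intro: compatible_side_by_side)
  moreover have "\<not> compatible (plus_corr S1 S2) t B (K1 + K2 + 1)"
  proof -
    have "K1 + K2 + 1 < bell_value t B (switch_box s1 s2 P Q)"
      using P Q closed_corr_set_is_box[OF S1 P(1)] closed_corr_set_is_box[OF S2 Q(1)]
      unfolding t_def B_def by (simp add: bell_value_switch_box)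
    then show ?thesis
      using switch_box_in_plus_corr[of P S1 s1 Q S2 s2, OF P(1) Q(1) s1 s2]
      unfolding t_def compatible_def by force
  qed
  ultimately have "\<not> stable_under_composition t B (K1 + K2 + 1)"
    using S1 S2 unfolding stable_under_composition_def by (auto simp: algebra_simps)
  moreover have "valid_scenario t"
    unfolding t_def using s1 s2 by (rule valid_scenario_side_by_side)
  ultimately show ?thesis by blast
qed

theorem theorem1:
  shows "(\<exists>s B K. valid_scenario s \<and> \<not> stable_under_composition s B K) \<longleftrightarrow>
         (\<exists>S1 S2. closed_corr_set S1 \<and> closed_corr_set S2 \<and>
                  inter_corr S1 S2 \<noteq> S1 \<and> inter_corr S1 S2 \<noteq> S2)"
  unfolding inter_corr_eq_left_iff inter_corr_eq_right_iff
proof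
  assume "\<exists>s B K. valid_scenario s \<and> \<not> stable_under_composition s B K"
  then show "\<exists>S1 S2. closed_corr_set S1 \<and> closed_corr_set S2
      \<and> \<not> (\<forall>s. S1 s \<subseteq> S2 s) \<and> \<not> (\<forall>s. S2 s \<subseteq> S1 s)"
    using incomparable_if_unstable by blast
next
  assume "\<exists>S1 S2. closed_corr_set S1 \<and> closed_corr_set S2
      \<and> \<not> (\<forall>s. S1 s \<subseteq> S2 s) \<and> \<not> (\<forall>s. S2 s \<subseteq> S1 s)"
  then obtain S1 S2 s1 s2 P0 Q0 where "closed_corr_set S1" "closed_corr_set S2"
    "P0 \<in> S1 s1" "P0 \<notin> S2 s1" "Q0 \<in> S2 s2" "Q0 \<notin> S1 s2"
    by blast
  then show "\<exists>s B K. valid_scenario s \<and> \<not> stable_under_composition s B K"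
    by (rule unstable_if_incomparable)
qed

end
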